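(* For all integers $n\ge 2$ and $b\ge 1$, the circulant graph $G_{nb,b}$ satisfies $\operatorname{box}(G_{nb,b})\le\chi(G_{nb,b})$.
   Context: For integers $a\ge 2b\ge 2$, $G_{a,b}$ is the graph with vertex set $\{0,1,\ldots,a-1\}$ in which distinct $u,v$ are adjacent if and only if $u\in\{v+b,v+b+1,\ldots,v+a-b\}$ with addition modulo $a$. The boxicity $\operatorname{box}(G)$ is the minimum nonnegative integer $k$ such that $G$ is isomorphic to the intersection graph of a family of boxes (Cartesian products of $k$ closed real intervals) in $\mathbb{R}^k$. $\chi(G)$ is the chromatic number. *)

theory Defs
  imports Complex_Main "HOL-Library.FuncSet"
begin

text \<open>Simple graphs are given by a vertex set V and an adjacency predicate E
  (only its values on distinct vertices of V matter).\<close>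

definition circ_V :: "nat \<Rightarrow> nat set" where
  "circ_V a = {0..<a}"

definition circ_adj :: "nat \<Rightarrow> nat \<Rightarrow> nat \<Rightarrow> nat \<Rightarrow> bool" where
  "circ_adj a b u v \<longleftrightarrow> u \<noteq> v \<and> (\<exists>j\<in>{b..a-b}. u mod a = (v + j) mod a)"

definition box_k :: "nat \<Rightarrow> (nat \<Rightarrow> real) \<Rightarrow> (nat \<Rightarrow> real) \<Rightarrow> (nat \<Rightarrow> real) set" where
  "box_k k l r = PiE {..<k} (\<lambda>i. {l i..r i})"

definition box_representable :: "'v set \<Rightarrow> ('v \<Rightarrow> 'v \<Rightarrow> bool) \<Rightarrow> nat \<Rightarrow> bool" where
  "box_representable V E k \<longleftrightarrow>
     (\<exists>l r :: 'v \<Rightarrow> nat \<Rightarrow> real.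
        (\<forall>v\<in>V. \<forall>i<k. l v i \<le> r v i) \<and>
        (\<forall>u\<in>V. \<forall>v\<in>V. u \<noteq> v \<longrightarrow>
            (E u v \<longleftrightarrow> box_k k (l u) (r u) \<inter> box_k k (l v) (r v) \<noteq> {})))"

definition boxicity :: "'v set \<Rightarrow> ('v \<Rightarrow> 'v \<Rightarrow> bool) \<Rightarrow> nat" where
  "boxicity V E = (LEAST k. box_representable V E k)"

definition colorable :: "'v set \<Rightarrow> ('v \<Rightarrow> 'v \<Rightarrow> bool) \<Rightarrow> nat \<Rightarrow> bool" where
  "colorable V E k \<longleftrightarrow> (\<exists>c :: 'v \<Rightarrow> nat. (\<forall>v\<in>V. c v < k) \<and>
      (\<forall>u\<in>V. \<forall>v\<in>V. u \<noteq> v \<and> E u v \<longrightarrow> c u \<noteq> c v))"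

definition chromatic_number :: "'v set \<Rightarrow> ('v \<Rightarrow> 'v \<Rightarrow> bool) \<Rightarrow> nat" where
  "chromatic_number V E = (LEAST k. colorable V E k)"

end

theory Submission
  imports Defs
begin

text \<open>Write a vertex of \<open>G\<^sub>n\<^sub>b\<^sub>,\<^sub>b\<close> as \<open>u = q b + r\<close> with \<open>q < n\<close> (its block) and \<open>r < b\<close>.
  Two distinct vertices are non-adjacent iff one of them lies less than \<open>b\<close> steps
  after the other, i.e. iff they lie in the same block, or in consecutive blocks (cyclically)
  with the later one having the smaller residue. Give vertex \<open>(q, r)\<close> the box in \<open>\<real>\<^sup>n\<close>
  which is the point \<open>r\<close> in coordinate \<open>q\<close>, the interval \<open>[0, r]\<close> in coordinate \<open>q - 1 mod n\<close>
  and \<open>[0, b]\<close> elsewhere: two such boxes meet exactly when the vertices are adjacent, so the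
  boxicity is at most \<open>n\<close>. The multiples \<open>0, b, \<dots>, (n - 1) b\<close> form a clique, so the
  chromatic number is at least \<open>n\<close>.\<close>

lemma of_nat_dvd_diff_iff_mod_eq:
  "int n dvd int x - int y \<longleftrightarrow> x mod n = y mod n"
  by (simp add: mod_eq_dvd_iff [symmetric] flip: of_nat_mod)

lemma circ_adj_iff:
  fixes a b u v :: nat
  assumes "0 < b" "u < a" "v < a"
  shows "circ_adj a b u v \<longleftrightarrow>
           u \<noteq> v \<and> \<not> (int u - int v) mod int a < int b \<and> \<not> (int v - int u) mod int a < int b"
proof -
  define d where "d = (int u - int v) mod int a"
  have "0 \<le> d" "d < int a"
    unfolding d_def using assms by simp_all
  have shift: "u mod a = (v + j) mod a \<longleftrightarrow> d = int j" if "j < a" for j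
  proof -
    have "u mod a = (v + j) mod a \<longleftrightarrow> (int u - int v) mod int a = int j mod int a"
      using of_nat_dvd_diff_iff_mod_eq[of a u "v + j"]
      by (simp add: mod_eq_dvd_iff algebra_simps)
    then show ?thesis using that unfolding d_def by simp
  qed
  have "(\<exists>j\<in>{b..a-b}. u mod a = (v + j) mod a) \<longleftrightarrow> int b \<le> d \<and> d \<le> int a - int b"
  proof
    assume "\<exists>j\<in>{b..a-b}. u mod a = (v + j) mod a"
    then obtain j where "b \<le> j" "j \<le> a - b" "u mod a = (v + j) mod a" by auto
    moreover have "j < a" using \<open>j \<le> a - b\<close> assms by linarith
    ultimately show "int b \<le> d \<and> d \<le> int a - int b" using shift by auto
  next
    assume "int b \<le> d \<and> d \<le> int a - int b"
    moreover have "nat d < a" using \<open>0 \<le> d\<close> \<open>d < int a\<close> by linarith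
    ultimately show "\<exists>j\<in>{b..a-b}. u mod a = (v + j) mod a"
      using shift[of "nat d"] \<open>0 \<le> d\<close> by (intro bexI[of _ "nat d"]) auto
  qed
  moreover have "(int v - int u) mod int a = int a - d" if "u \<noteq> v"
  proof -
    have "d \<noteq> 0"
      using that assms of_nat_dvd_diff_iff_mod_eq[of a u v] unfolding d_def by auto
    then show ?thesis
      using zmod_zminus1_eq_if[of "int u - int v" "int a"] unfolding d_def by simp
  qed
  ultimately show ?thesis unfolding circ_adj_def d_def[symmetric] by auto
qed

lemma zmod_mult_less_iff_dvd_div:
  fixes x b n :: int
  assumes "0 < b" "0 < n"
  shows "x mod (n * b) < b \<longleftrightarrow> n dvd x div b"
proof -
  define k where "k = x div b mod n"
  have split: "x mod (n * b) = b * k + x mod b"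
    unfolding k_def using zmod_zmult2_eq[of n x b] assms by (simp add: mult.commute)
  have "0 \<le> k" "0 \<le> x mod b" "x mod b < b"
    unfolding k_def using assms by simp_all
  moreover have "b \<le> b * k" if "k \<noteq> 0"
    using that \<open>0 \<le> k\<close> assms(1) by (simp add: mult_le_cancel_left1)
  ultimately have "x mod (n * b) < b \<longleftrightarrow> k = 0"
    unfolding split by fastforce
  then show ?thesis by (simp add: k_def dvd_eq_mod_eq_0)
qed

lemma int_diff_div_eq:
  fixes u v b :: nat
  assumes "0 < b"
  shows "(int u - int v) div int b
           = int (u div b) - int (v div b) - of_bool (u mod b < v mod b)"
proof -
  define r where "r = int (u mod b) - int (v mod b)"
  have "int u - int v = r + (int (u div b) - int (v div b)) * int b"
    unfolding r_def by (simp add: algebra_simps flip: of_nat_mult of_nat_add)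
  then have "(int u - int v) div int b = r div int b + (int (u div b) - int (v div b))"
    using assms by simp
  moreover have "r div int b = - of_bool (u mod b < v mod b)"
  proof (cases "u mod b < v mod b")
    case True
    have "v mod b < b" using assms by simp
    then have "(r + int b) div int b = 0"
      using True unfolding r_def by (intro div_pos_pos_trivial) linarith+
    then show ?thesis using True assms by simp
  next
    case False
    have "u mod b < b" using assms by simp
    then have "r div int b = 0"
      using False unfolding r_def by (intro div_pos_pos_trivial) linarith+
    then show ?thesis using False by simp
  qed
  ultimately show ?thesis by simp
qed

lemma circ_diff_mod_less_iff:
  fixes n b u v :: nat
  assumes "0 < b" "u < n * b" "v < n * b"
  shows "(int u - int v) mod int (n * b) < int b \<longleftrightarrow>
           (u div b = v div b \<and> v mod b \<le> u mod b) \<or>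
           (u div b = Suc (v div b) mod n \<and> u mod b < v mod b)"
proof -
  have blocks: "u div b < n" "v div b < n"
    using assms by (simp_all add: less_mult_imp_div_less)
  then have "0 < n" by simp
  have "(int u - int v) mod int (n * b) < int b \<longleftrightarrow>
          int n dvd int (u div b) - int (v div b) - of_bool (u mod b < v mod b)"
    using zmod_mult_less_iff_dvd_div[of "int b" "int n"] int_diff_div_eq[OF assms(1)]
      assms(1) \<open>0 < n\<close> by simp
  also have "\<dots> \<longleftrightarrow> (if u mod b < v mod b then u div b mod n = Suc (v div b) mod n
                     else u div b mod n = v div b mod n)"
    using of_nat_dvd_diff_iff_mod_eq[of n "u div b" "Suc (v div b)"]
    by (simp add: of_nat_dvd_diff_iff_mod_eq algebra_simps)
  finally show ?thesis using blocks by auto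
qed

lemma circ_adj_iff_blocks:
  fixes n b u v :: nat
  assumes "0 < b" "u < n * b" "v < n * b"
  shows "circ_adj (n * b) b u v \<longleftrightarrow> u \<noteq> v \<and>
           (u div b = v div b \<or> v div b = Suc (u div b) mod n \<longrightarrow> u mod b \<le> v mod b) \<and>
           (u div b = v div b \<or> u div b = Suc (v div b) mod n \<longrightarrow> v mod b \<le> u mod b)"
proof -
  obtain q r q' r' where
    q: "q = u div b" and r: "r = u mod b" and q': "q' = v div b" and r': "r' = v mod b"
    by blast
  have "u \<noteq> v \<longleftrightarrow> q \<noteq> q' \<or> r \<noteq> r'"
    unfolding q r q' r' by (metis div_mult_mod_eq)
  then show ?thesis
    unfolding circ_adj_iff[OF assms] circ_diff_mod_less_iff[OF assms]
      circ_diff_mod_less_iff[OF assms(1,3,2)]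
    unfolding q[symmetric] r[symmetric] q'[symmetric] r'[symmetric]
    by auto
qed

lemma box_k_Int_nonempty_iff:
  "box_k k l1 r1 \<inter> box_k k l2 r2 \<noteq> {} \<longleftrightarrow> (\<forall>i<k. max (l1 i) (l2 i) \<le> min (r1 i) (r2 i))"
  unfolding box_k_def PiE_Int PiE_eq_empty_iff by auto

definition circ_box_lo :: "nat \<Rightarrow> nat \<Rightarrow> nat \<Rightarrow> real" where
  "circ_box_lo q r i = (if i = q then real r else 0)"

definition circ_box_hi :: "nat \<Rightarrow> nat \<Rightarrow> nat \<Rightarrow> nat \<Rightarrow> nat \<Rightarrow> real" where
  "circ_box_hi n b q r i = (if i = q \<or> q = Suc i mod n then real r else real b)"

lemma circ_box_at_block:
  "circ_box_lo q r q = real r" "circ_box_hi n b q r q = real r"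
  "q = q' \<or> q' = Suc q mod n \<Longrightarrow> circ_box_hi n b q' r' q = real r'"
  by (auto simp: circ_box_lo_def circ_box_hi_def)

lemma circ_boxes_intersect_iff:
  fixes n b q r q' r' :: nat
  assumes "2 \<le> n" "q < n" "q' < n" "r < b" "r' < b"
  shows "box_k n (circ_box_lo q r) (circ_box_hi n b q r) \<inter>
           box_k n (circ_box_lo q' r') (circ_box_hi n b q' r') \<noteq> {} \<longleftrightarrow>
         (q = q' \<or> q' = Suc q mod n \<longrightarrow> r \<le> r') \<and> (q = q' \<or> q = Suc q' mod n \<longrightarrow> r' \<le> r)"
  unfolding box_k_Int_nonempty_iff
proof
  assume meet: "\<forall>i<n. max (circ_box_lo q r i) (circ_box_lo q' r' i)
                  \<le> min (circ_box_hi n b q r i) (circ_box_hi n b q' r' i)"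
  have "real r \<le> circ_box_hi n b q' r' q" "real r' \<le> circ_box_hi n b q r q'"
    using meet[rule_format, OF assms(2)] meet[rule_format, OF assms(3)]
    by (simp_all add: circ_box_at_block)
  then show "(q = q' \<or> q' = Suc q mod n \<longrightarrow> r \<le> r') \<and> (q = q' \<or> q = Suc q' mod n \<longrightarrow> r' \<le> r)"
    using circ_box_at_block(3) by fastforce
next
  assume "(q = q' \<or> q' = Suc q mod n \<longrightarrow> r \<le> r') \<and> (q = q' \<or> q = Suc q' mod n \<longrightarrow> r' \<le> r)"
  then show "\<forall>i<n. max (circ_box_lo q r i) (circ_box_lo q' r' i)
                  \<le> min (circ_box_hi n b q r i) (circ_box_hi n b q' r' i)"
    using assms(4,5) by (auto simp: circ_box_lo_def circ_box_hi_def)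
qed

lemma circ_box_representable:
  assumes "2 \<le> n" "0 < b"
  shows "box_representable (circ_V (n * b)) (circ_adj (n * b) b) n"
proof -
  define l where "l u = circ_box_lo (u div b) (u mod b)" for u
  define r where "r u = circ_box_hi n b (u div b) (u mod b)" for u
  have "l v i \<le> r v i" for v i
    unfolding l_def r_def circ_box_lo_def circ_box_hi_def by simp
  moreover have "circ_adj (n * b) b u v \<longleftrightarrow> box_k n (l u) (r u) \<inter> box_k n (l v) (r v) \<noteq> {}"
    if "u < n * b" "v < n * b" "u \<noteq> v" for u v
    unfolding l_def r_def circ_adj_iff_blocks[OF assms(2) that(1,2)]
    using circ_boxes_intersect_iff[OF assms(1)] that assms(2)
    by (simp add: less_mult_imp_div_less)
  ultimately show ?thesis
    unfolding box_representable_def circ_V_def by (intro exI[of _ l] exI[of _ r]) auto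
qed

lemma circ_adj_multiples:
  assumes "0 < b" "i < n" "j < n" "i \<noteq> j"
  shows "circ_adj (n * b) b (i * b) (j * b)"
proof -
  have ib: "i * b < n * b" and jb: "j * b < n * b"
    using assms by simp_all
  show ?thesis
    unfolding circ_adj_iff_blocks[OF assms(1) ib jb] using assms by simp
qed

lemma boxicity_le: "box_representable V E k \<Longrightarrow> boxicity V E \<le> k"
  unfolding boxicity_def by (rule Least_le)

lemma card_clique_le_colors:
  assumes "colorable V E k" "C \<subseteq> V" "\<forall>u\<in>C. \<forall>v\<in>C. u \<noteq> v \<longrightarrow> E u v"
  shows "card C \<le> k"
proof -
  obtain c where c: "\<forall>v\<in>V. c v < k" "\<forall>u\<in>V. \<forall>v\<in>V. u \<noteq> v \<and> E u v \<longrightarrow> c u \<noteq> c v"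
    using assms(1) unfolding colorable_def by blast
  have "inj_on c C"
    unfolding inj_on_def using assms(2,3) c(2) by blast
  then have "card C \<le> card {..<k}"
    using assms(2) c(1) by (intro card_inj_on_le) auto
  then show ?thesis by simp
qed

lemma card_clique_le_chromatic_number:
  assumes "colorable V E k" "C \<subseteq> V" "\<forall>u\<in>C. \<forall>v\<in>C. u \<noteq> v \<longrightarrow> E u v"
  shows "card C \<le> chromatic_number V E"
  unfolding chromatic_number_def
  using LeastI[of "colorable V E", OF assms(1)] assms(2,3) by (rule card_clique_le_colors)

lemma colorable_circ_V: "colorable (circ_V a) E a"
  unfolding colorable_def by (rule exI[of _ id]) (auto simp: circ_V_def)

theorem theorem4p1:
  fixes n b :: nat
  assumes "n \<ge> 2" and "b \<ge> 1"
  shows "boxicity (circ_V (n*b)) (circ_adj (n*b) b)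
           \<le> chromatic_number (circ_V (n*b)) (circ_adj (n*b) b)"
proof -
  have "0 < b" using assms(2) by simp
  define C where "C = (\<lambda>j. j * b) ` {..<n}"
  have "card C = n"
    unfolding C_def using \<open>0 < b\<close> by (simp add: card_image inj_on_def)
  moreover have "C \<subseteq> circ_V (n * b)"
    unfolding C_def circ_V_def using \<open>0 < b\<close> by auto
  moreover have "\<forall>u\<in>C. \<forall>v\<in>C. u \<noteq> v \<longrightarrow> circ_adj (n * b) b u v"
    unfolding C_def using circ_adj_multiples[OF \<open>0 < b\<close>] by auto
  ultimately have "n \<le> chromatic_number (circ_V (n*b)) (circ_adj (n*b) b)"
    using card_clique_le_chromatic_number[OF colorable_circ_V, of C] by simp
  moreover have "boxicity (circ_V (n*b)) (circ_adj (n*b) b) \<le> n"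
    using boxicity_le circ_box_representable[OF assms(1) \<open>0 < b\<close>] .
  ultimately show ?thesis by linarith
qed

end
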